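(* Assume $b_1<n^*$ and $b_2<m^*$. Then in every Nash equilibrium $(\sigma^{1*},\sigma^{2*})$ of $\Gamma(b_1,b_2)$, the node basis of $\sigma^{1*}$ is a set cover. Furthermore, $\Gamma(b_1,b_2)$ has no Nash equilibrium in which $\sigma^{1*}$ or $\sigma^{2*}$ is a point mass (both players must randomize).
   Context: Detection model: finite nonempty sets $\mathcal V$, $\mathcal E$, monitoring sets $\mathcal C_i\subseteq\mathcal E$ ($i\in\mathcal V$) with every $e\in\mathcal E$ in some $\mathcal C_i$; $\mathcal C_S=\bigcup_{i\in S}\mathcal C_i$; $F(S,T)=|\mathcal C_S\cap T|$. Set cover: $S\subseteq\mathcal V$ with $\mathcal C_S=\mathcal E$; $n^*$ = minimum size of a set cover. Set packing: $T\subseteq\mathcal E$ with $|\mathcal C_i\cap T|\le1$ for all $i$; $m^*$ = maximum size of a set packing. Game $\Gamma(b_1,b_2)$ ($b_1,b_2$ positive integers): $\mathcal A_1=\{S\subseteq\mathcal V:|S|\le b_1\}$, $\mathcal A_2=\{T\subseteq\mathcal E:|T|\le b_2\}$; mixed strategies $\sigma^1\in\Delta(\mathcal A_1)$, $\sigma^2\in\Delta(\mathcal A_2)$ (independent); payoffs $U_1=\mathbb E[F(S,T)]$, $U_2=\mathbb E[|T|]-\mathbb E[F(S,T)]$; Nash equilibrium in mixed strategies as usual. The node basis of $\sigma^1$ is $\{i\in\mathcal V:\mathbb P_{S\sim\sigma^1}(i\in S)>0\}$. *)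

theory Defs
  imports "HOL-Probability.Probability"
begin

definition detection_model :: "'v set \<Rightarrow> 'e set \<Rightarrow> ('v \<Rightarrow> 'e set) \<Rightarrow> bool" where
  "detection_model V E C \<longleftrightarrow> finite V \<and> finite E \<and> V \<noteq> {} \<and> E \<noteq> {} \<and>
     (\<forall>i\<in>V. C i \<subseteq> E) \<and> (\<forall>e\<in>E. \<exists>i\<in>V. e \<in> C i)"

definition covered :: "('v \<Rightarrow> 'e set) \<Rightarrow> 'v set \<Rightarrow> 'e set" where
  "covered C S = (\<Union>i\<in>S. C i)"

definition detF :: "('v \<Rightarrow> 'e set) \<Rightarrow> 'v set \<Rightarrow> 'e set \<Rightarrow> nat" where
  "detF C S T = card (covered C S \<inter> T)"

definition is_set_cover :: "'v set \<Rightarrow> 'e set \<Rightarrow> ('v \<Rightarrow> 'e set) \<Rightarrow> 'v set \<Rightarrow> bool" where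
  "is_set_cover V E C S \<longleftrightarrow> S \<subseteq> V \<and> covered C S = E"

definition is_set_packing :: "'v set \<Rightarrow> 'e set \<Rightarrow> ('v \<Rightarrow> 'e set) \<Rightarrow> 'e set \<Rightarrow> bool" where
  "is_set_packing V E C T \<longleftrightarrow> T \<subseteq> E \<and> (\<forall>i\<in>V. card (C i \<inter> T) \<le> 1)"

definition n_star :: "'v set \<Rightarrow> 'e set \<Rightarrow> ('v \<Rightarrow> 'e set) \<Rightarrow> nat" where
  "n_star V E C = Min (card ` {S. is_set_cover V E C S})"

definition m_star :: "'v set \<Rightarrow> 'e set \<Rightarrow> ('v \<Rightarrow> 'e set) \<Rightarrow> nat" where
  "m_star V E C = Max (card ` {T. is_set_packing V E C T})"

definition A1 :: "'v set \<Rightarrow> nat \<Rightarrow> 'v set set" where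
  "A1 V b1 = {S. S \<subseteq> V \<and> card S \<le> b1}"

definition A2 :: "'e set \<Rightarrow> nat \<Rightarrow> 'e set set" where
  "A2 E b2 = {T. T \<subseteq> E \<and> card T \<le> b2}"

definition mixed :: "'a set \<Rightarrow> 'a pmf set" where
  "mixed A = {\<sigma>. set_pmf \<sigma> \<subseteq> A}"

definition U1 :: "('v \<Rightarrow> 'e set) \<Rightarrow> 'v set pmf \<Rightarrow> 'e set pmf \<Rightarrow> real" where
  "U1 C \<sigma>1 \<sigma>2 = measure_pmf.expectation (pair_pmf \<sigma>1 \<sigma>2) (\<lambda>(S, T). real (detF C S T))"

definition U2 :: "('v \<Rightarrow> 'e set) \<Rightarrow> 'v set pmf \<Rightarrow> 'e set pmf \<Rightarrow> real" where
  "U2 C \<sigma>1 \<sigma>2 = measure_pmf.expectation (pair_pmf \<sigma>1 \<sigma>2) (\<lambda>(S, T). real (card T))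
                 - U1 C \<sigma>1 \<sigma>2"

definition nash_eq :: "'v set \<Rightarrow> 'e set \<Rightarrow> ('v \<Rightarrow> 'e set) \<Rightarrow> nat \<Rightarrow> nat
                        \<Rightarrow> 'v set pmf \<Rightarrow> 'e set pmf \<Rightarrow> bool" where
  "nash_eq V E C b1 b2 \<sigma>1 \<sigma>2 \<longleftrightarrow>
     \<sigma>1 \<in> mixed (A1 V b1) \<and> \<sigma>2 \<in> mixed (A2 E b2) \<and>
     (\<forall>\<tau>\<in>mixed (A1 V b1). U1 C \<tau> \<sigma>2 \<le> U1 C \<sigma>1 \<sigma>2) \<and>
     (\<forall>\<tau>\<in>mixed (A2 E b2). U2 C \<sigma>1 \<tau> \<le> U2 C \<sigma>1 \<sigma>2)"

definition node_basis :: "'v set \<Rightarrow> 'v set pmf \<Rightarrow> 'v set" where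
  "node_basis V \<sigma>1 = {i\<in>V. measure_pmf.prob \<sigma>1 {S. i \<in> S} > 0}"

end

theory Submission imports Defs begin

text \<open>Against the equilibrium mixed strategies both players face linear payoffs: a defender set
  \<open>S\<close> earns the total attack probability of the edges it covers, an attack set \<open>T\<close> earns the
  total non-detection probability of its edges, and every pure strategy in a support is a best
  response. A packing with \<open>b\<^sub>2 + 1\<close> edges forces the defender's value below \<open>b\<^sub>1\<close>, so a supported
  defender set covers every edge that is attacked surely: otherwise adding a node monitoring it,
  or exchanging it for the node of smallest marginal gain, would increase the payoff. An edge outside
  the cover of the node basis is never detected, and a best-responding attacker then attacks it
  surely. Pure strategies are ruled out the same way, since no set of at most \<open>b\<^sub>1\<close> nodes is a
  cover.\<close>

lemma expectation_pair_pmf_eq_sum: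
  assumes "finite A" "finite B" "set_pmf \<sigma> \<subseteq> A" "set_pmf \<tau> \<subseteq> B"
  shows "measure_pmf.expectation (pair_pmf \<sigma> \<tau>) f
         = (\<Sum>x\<in>A. \<Sum>y\<in>B. pmf \<sigma> x * pmf \<tau> y * f (x, y))"
proof -
  have "measure_pmf.expectation (pair_pmf \<sigma> \<tau>) f = (\<Sum>z\<in>A \<times> B. f z * pmf (pair_pmf \<sigma> \<tau>) z)"
    using assms by (intro integral_measure_pmf_real) auto
  also have "\<dots> = (\<Sum>z\<in>A \<times> B. pmf \<sigma> (fst z) * pmf \<tau> (snd z) * f z)"
    by (rule sum.cong) (auto simp: pmf_pair)
  finally show ?thesis
    by (simp add: sum.cartesian_product split_def)
qed

lemma best_response_on_support:
  assumes "finite A" "set_pmf \<sigma> \<subseteq> A"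
    and le: "\<And>y. y \<in> A \<Longrightarrow> f y \<le> (\<Sum>z\<in>A. pmf \<sigma> z * f z)"
    and x: "x \<in> set_pmf \<sigma>"
  shows "f x = (\<Sum>z\<in>A. pmf \<sigma> z * f z)"
proof -
  let ?v = "\<Sum>z\<in>A. pmf \<sigma> z * f z"
  have "(\<Sum>z\<in>A. pmf \<sigma> z * (?v - f z)) = ?v * (\<Sum>z\<in>A. pmf \<sigma> z) - ?v"
    by (simp add: right_diff_distrib sum_subtractf sum_distrib_right mult.commute)
  also have "\<dots> = 0"
    using assms by (simp add: sum_pmf_eq_1)
  finally have "\<forall>z\<in>A. pmf \<sigma> z * (?v - f z) = 0"
    using assms le by (subst sum_nonneg_eq_0_iff[symmetric]) auto
  moreover have "x \<in> A" "0 < pmf \<sigma> x"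
    using assms by (auto simp: pmf_positive)
  ultimately show ?thesis
    by auto
qed

lemma real_card_Int_eq_sum:
  assumes "finite A"
  shows "real (card (A \<inter> T)) = (\<Sum>e\<in>A. if e \<in> T then 1 else 0)"
  using assms by (simp add: sum.If_cases Int_def)

lemma card_covered_Int_packing_le:
  assumes "is_set_packing V E C Q" "finite S" "S \<subseteq> V"
  shows "card (covered C S \<inter> Q) \<le> card S"
proof -
  have "covered C S \<inter> Q = (\<Union>i\<in>S. C i \<inter> Q)"
    by (auto simp: covered_def)
  then have "card (covered C S \<inter> Q) \<le> (\<Sum>i\<in>S. card (C i \<inter> Q))"
    by (simp only: card_UN_le[OF assms(2)])
  also have "\<dots> \<le> (\<Sum>i\<in>S. 1)"
    using assms by (intro sum_mono) (auto simp: is_set_packing_def)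
  finally show ?thesis
    by simp
qed

lemma sum_covered_marginals_le:
  fixes r :: "'e \<Rightarrow> real"
  assumes "finite S" "finite (covered C S)" and r: "\<And>e. 0 \<le> r e"
  shows "(\<Sum>j\<in>S. (\<Sum>e\<in>covered C S. r e) - (\<Sum>e\<in>covered C (S - {j}). r e))
         \<le> (\<Sum>e\<in>covered C S. r e)"
proof -
  define D where "D j = covered C S - covered C (S - {j})" for j
  have "(\<Sum>e\<in>covered C S. r e) - (\<Sum>e\<in>covered C (S - {j}). r e) = (\<Sum>e\<in>D j. r e)" for j
    unfolding D_def using assms(2) by (intro sum_diff[symmetric]) (auto simp: covered_def)
  then have "(\<Sum>j\<in>S. (\<Sum>e\<in>covered C S. r e) - (\<Sum>e\<in>covered C (S - {j}). r e))
      = (\<Sum>j\<in>S. \<Sum>e\<in>D j. r e)"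
    by simp
  also have "\<dots> = (\<Sum>e\<in>(\<Union>j\<in>S. D j). r e)"
    using assms(1,2) by (intro sum.UNION_disjoint[symmetric]) (auto simp: D_def covered_def)
  also have "\<dots> \<le> (\<Sum>e\<in>covered C S. r e)"
    using assms(2) r by (intro sum_mono2) (auto simp: D_def)
  finally show ?thesis .
qed

lemma is_set_packing_subset:
  assumes "is_set_packing V E C P" "Q \<subseteq> P" "finite P"
  shows "is_set_packing V E C Q"
proof -
  have "card (C i \<inter> Q) \<le> card (C i \<inter> P)" for i
    using assms(2,3) by (intro card_mono) auto
  then show ?thesis
    using assms(1,2) unfolding is_set_packing_def by (meson order_trans subset_trans)
qed

lemma n_star_le_card_cover:
  assumes "finite V" "is_set_cover V E C S"
  shows "n_star V E C \<le> card S"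
proof -
  have "finite {S. is_set_cover V E C S}"
    by (rule finite_subset[of _ "Pow V"]) (auto simp: is_set_cover_def assms(1))
  then show ?thesis
    unfolding n_star_def using assms(2) by (intro Min_le) auto
qed

lemma exists_packing_card_m_star:
  assumes "finite E"
  obtains Q where "is_set_packing V E C Q" "card Q = m_star V E C"
proof -
  have "finite {Q. is_set_packing V E C Q}"
    by (rule finite_subset[of _ "Pow E"]) (auto simp: is_set_packing_def assms)
  moreover have "is_set_packing V E C {}"
    by (simp add: is_set_packing_def)
  ultimately have "m_star V E C \<in> card ` {Q. is_set_packing V E C Q}"
    unfolding m_star_def by (intro Max_in) auto
  then show ?thesis
    using that by auto
qed

locale nash_equilibrium =
  fixes V :: "'v set" and E :: "'e set" and C :: "'v \<Rightarrow> 'e set" and b1 b2 :: nat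
    and \<sigma>1 :: "'v set pmf" and \<sigma>2 :: "'e set pmf"
  assumes model: "detection_model V E C"
    and b1_pos: "0 < b1" and b2_pos: "0 < b2"
    and nash: "nash_eq V E C b1 b2 \<sigma>1 \<sigma>2"
begin

lemma finite_V: "finite V" and finite_E: "finite E"
  and monitor_subset: "i \<in> V \<Longrightarrow> C i \<subseteq> E" and monitored: "e \<in> E \<Longrightarrow> \<exists>i\<in>V. e \<in> C i"
  using model by (auto simp: detection_model_def)

lemma finite_A1: "finite (A1 V b1)"
  by (rule finite_subset[of _ "Pow V"]) (auto simp: A1_def finite_V)

lemma finite_A2: "finite (A2 E b2)"
  by (rule finite_subset[of _ "Pow E"]) (auto simp: A2_def finite_E)

lemma A1D: "S \<in> A1 V b1 \<Longrightarrow> S \<subseteq> V \<and> finite S \<and> card S \<le> b1"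
  using finite_V by (auto simp: A1_def intro: finite_subset)

lemma A2D: "T \<in> A2 E b2 \<Longrightarrow> T \<subseteq> E \<and> finite T \<and> card T \<le> b2"
  using finite_E by (auto simp: A2_def intro: finite_subset)

lemma covered_subset_E: "S \<subseteq> V \<Longrightarrow> covered C S \<subseteq> E"
  using monitor_subset by (auto simp: covered_def)

lemma finite_covered: "S \<subseteq> V \<Longrightarrow> finite (covered C S)"
  using covered_subset_E finite_E finite_subset by blast

lemma support_\<sigma>1: "set_pmf \<sigma>1 \<subseteq> A1 V b1" and support_\<sigma>2: "set_pmf \<sigma>2 \<subseteq> A2 E b2"
  using nash by (auto simp: nash_eq_def mixed_def)

definition attack_prob :: "'e \<Rightarrow> real" where
  "attack_prob e = (\<Sum>T\<in>A2 E b2. pmf \<sigma>2 T * (if e \<in> T then 1 else 0))"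

definition detect_prob :: "'e \<Rightarrow> real" where
  "detect_prob e = (\<Sum>S\<in>A1 V b1. pmf \<sigma>1 S * (if e \<in> covered C S then 1 else 0))"

definition defender_payoff :: "'v set \<Rightarrow> real" where
  "defender_payoff S = (\<Sum>e\<in>covered C S. attack_prob e)"

definition attacker_payoff :: "'e set \<Rightarrow> real" where
  "attacker_payoff T = (\<Sum>e\<in>T. 1 - detect_prob e)"

lemma U1_against_\<sigma>2:
  assumes "set_pmf \<tau> \<subseteq> A1 V b1"
  shows "U1 C \<tau> \<sigma>2 = (\<Sum>S\<in>A1 V b1. pmf \<tau> S * defender_payoff S)"
proof -
  have "(\<Sum>T\<in>A2 E b2. pmf \<tau> S * pmf \<sigma>2 T * real (detF C S T)) = pmf \<tau> S * defender_payoff S"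
    if "S \<in> A1 V b1" for S
    using finite_covered[of S] A1D[OF that] unfolding defender_payoff_def attack_prob_def detF_def
    by (simp add: real_card_Int_eq_sum sum_distrib_left mult.assoc sum.swap[of _ "A2 E b2"])
  then show ?thesis
    unfolding U1_def expectation_pair_pmf_eq_sum[OF finite_A1 finite_A2 assms support_\<sigma>2]
    by simp
qed

lemma expected_card:
  assumes "set_pmf \<tau> \<subseteq> A2 E b2"
  shows "measure_pmf.expectation (pair_pmf \<sigma>1 \<tau>) (\<lambda>(S, T). real (card T))
         = (\<Sum>T\<in>A2 E b2. pmf \<tau> T * card T)"
proof -
  have "measure_pmf.expectation (pair_pmf \<sigma>1 \<tau>) (\<lambda>(S, T). real (card T))
      = (\<Sum>S\<in>A1 V b1. pmf \<sigma>1 S) * (\<Sum>T\<in>A2 E b2. pmf \<tau> T * card T)"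
    by (simp add: expectation_pair_pmf_eq_sum[OF finite_A1 finite_A2 support_\<sigma>1 assms]
        sum_product mult.assoc)
  then show ?thesis
    using finite_A1 support_\<sigma>1 by (simp add: sum_pmf_eq_1)
qed

lemma U2_against_\<sigma>1:
  assumes "set_pmf \<tau> \<subseteq> A2 E b2"
  shows "U2 C \<sigma>1 \<tau> = (\<Sum>T\<in>A2 E b2. pmf \<tau> T * attacker_payoff T)"
proof -
  have "(\<Sum>S\<in>A1 V b1. pmf \<sigma>1 S * pmf \<tau> T * real (detF C S T))
      = pmf \<tau> T * (\<Sum>e\<in>T. detect_prob e)" if "T \<in> A2 E b2" for T
    using A2D[OF that] unfolding detect_prob_def detF_def
    by (simp add: Int_commute real_card_Int_eq_sum sum_distrib_left mult_ac
        sum.swap[of _ "A1 V b1"])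
  then have "U1 C \<sigma>1 \<tau> = (\<Sum>T\<in>A2 E b2. pmf \<tau> T * (\<Sum>e\<in>T. detect_prob e))"
    unfolding U1_def expectation_pair_pmf_eq_sum[OF finite_A1 finite_A2 support_\<sigma>1 assms]
    by (subst sum.swap) simp
  moreover have "pmf \<tau> T * real (card T) - pmf \<tau> T * (\<Sum>e\<in>T. detect_prob e)
      = pmf \<tau> T * attacker_payoff T" if "T \<in> A2 E b2" for T
    using A2D[OF that] by (simp add: attacker_payoff_def sum_subtractf right_diff_distrib)
  ultimately show ?thesis
    unfolding U2_def expected_card[OF assms] by (simp add: sum_subtractf[symmetric])
qed

lemma defender_payoff_le:
  assumes "S \<in> A1 V b1"
  shows "defender_payoff S \<le> U1 C \<sigma>1 \<sigma>2"
proof -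
  have "U1 C (return_pmf S) \<sigma>2 \<le> U1 C \<sigma>1 \<sigma>2"
    using nash assms by (simp add: nash_eq_def mixed_def)
  then show ?thesis
    using U1_against_\<sigma>2[of "return_pmf S"] assms finite_A1 by (simp add: indicator_def)
qed

lemma attacker_payoff_le:
  assumes "T \<in> A2 E b2"
  shows "attacker_payoff T \<le> U2 C \<sigma>1 \<sigma>2"
proof -
  have "U2 C \<sigma>1 (return_pmf T) \<le> U2 C \<sigma>1 \<sigma>2"
    using nash assms by (simp add: nash_eq_def mixed_def)
  then show ?thesis
    using U2_against_\<sigma>1[of "return_pmf T"] assms finite_A2 by (simp add: indicator_def)
qed

lemma defender_payoff_eq: "S \<in> set_pmf \<sigma>1 \<Longrightarrow> defender_payoff S = U1 C \<sigma>1 \<sigma>2"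
  using best_response_on_support[OF finite_A1 support_\<sigma>1] defender_payoff_le
  by (simp add: U1_against_\<sigma>2[OF support_\<sigma>1])

lemma attacker_payoff_eq: "T \<in> set_pmf \<sigma>2 \<Longrightarrow> attacker_payoff T = U2 C \<sigma>1 \<sigma>2"
  using best_response_on_support[OF finite_A2 support_\<sigma>2] attacker_payoff_le
  by (simp add: U2_against_\<sigma>1[OF support_\<sigma>2])

lemma U1_plus_U2_le: "U1 C \<sigma>1 \<sigma>2 + U2 C \<sigma>1 \<sigma>2 \<le> b2"
proof -
  have "U1 C \<sigma>1 \<sigma>2 + U2 C \<sigma>1 \<sigma>2 = (\<Sum>T\<in>A2 E b2. pmf \<sigma>2 T * card T)"
    by (simp add: U2_def expected_card[OF support_\<sigma>2])
  also have "\<dots> \<le> (\<Sum>T\<in>A2 E b2. pmf \<sigma>2 T * b2)"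
    by (intro sum_mono mult_left_mono) (auto dest: A2D)
  also have "\<dots> = b2"
    using finite_A2 support_\<sigma>2 by (simp add: sum_distrib_right[symmetric] sum_pmf_eq_1)
  finally show ?thesis .
qed

lemma attack_prob_nonneg: "0 \<le> attack_prob e"
  unfolding attack_prob_def by (intro sum_nonneg) auto

lemma detect_prob_nonneg: "0 \<le> detect_prob e"
  unfolding detect_prob_def by (intro sum_nonneg) auto

lemma attack_prob_ge_pmf:
  assumes "T \<in> set_pmf \<sigma>2" "e \<in> T"
  shows "pmf \<sigma>2 T \<le> attack_prob e"
proof -
  have "pmf \<sigma>2 T = pmf \<sigma>2 T * (if e \<in> T then 1 else 0)"
    using assms by simp
  also have "\<dots> \<le> attack_prob e"
    unfolding attack_prob_def using assms support_\<sigma>2 finite_A2 by (intro member_le_sum) auto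
  finally show ?thesis .
qed

lemma attack_prob_eq_1:
  assumes "\<And>T. T \<in> set_pmf \<sigma>2 \<Longrightarrow> e \<in> T"
  shows "attack_prob e = 1"
proof -
  have "attack_prob e = (\<Sum>T\<in>A2 E b2. pmf \<sigma>2 T)"
    unfolding attack_prob_def using assms by (intro sum.cong) (auto simp: set_pmf_iff)
  then show ?thesis
    using finite_A2 support_\<sigma>2 by (simp add: sum_pmf_eq_1)
qed

lemma detect_prob_eq_0:
  assumes "\<And>S. S \<in> set_pmf \<sigma>1 \<Longrightarrow> e \<notin> covered C S"
  shows "detect_prob e = 0"
  unfolding detect_prob_def using assms by (intro sum.neutral) (auto simp: set_pmf_iff)

lemma detect_prob_eq_1:
  assumes "\<And>S. S \<in> set_pmf \<sigma>1 \<Longrightarrow> e \<in> covered C S"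
  shows "detect_prob e = 1"
proof -
  have "detect_prob e = (\<Sum>S\<in>A1 V b1. pmf \<sigma>1 S)"
    unfolding detect_prob_def using assms by (intro sum.cong) (auto simp: set_pmf_iff)
  then show ?thesis
    using finite_A1 support_\<sigma>1 by (simp add: sum_pmf_eq_1)
qed

lemma detect_prob_le:
  assumes S: "S \<in> set_pmf \<sigma>1" and e: "e \<notin> covered C S"
  shows "detect_prob e \<le> 1 - pmf \<sigma>1 S"
proof -
  have S': "S \<in> A1 V b1"
    using S support_\<sigma>1 by auto
  have "detect_prob e
      = (\<Sum>S'\<in>A1 V b1 - {S}. pmf \<sigma>1 S' * (if e \<in> covered C S' then 1 else 0))"
    unfolding detect_prob_def using S' finite_A1 e by (subst sum.remove[of _ S]) auto
  also have "\<dots> \<le> (\<Sum>S'\<in>A1 V b1 - {S}. pmf \<sigma>1 S')"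
    by (intro sum_mono) auto
  also have "\<dots> = 1 - pmf \<sigma>1 S"
    using S' finite_A1 support_\<sigma>1 by (simp add: sum_diff1 sum_pmf_eq_1)
  finally show ?thesis .
qed

lemma sum_detect_prob_packing_le:
  assumes Q: "is_set_packing V E C Q"
  shows "(\<Sum>e\<in>Q. detect_prob e) \<le> b1"
proof -
  have "finite Q"
    using Q finite_E by (auto simp: is_set_packing_def intro: finite_subset)
  then have "(\<Sum>e\<in>Q. detect_prob e) = (\<Sum>S\<in>A1 V b1. pmf \<sigma>1 S * card (covered C S \<inter> Q))"
    unfolding detect_prob_def
    by (subst sum.swap) (simp add: sum_distrib_left Int_commute real_card_Int_eq_sum)
  also have "\<dots> \<le> (\<Sum>S\<in>A1 V b1. pmf \<sigma>1 S * b1)"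
    using card_covered_Int_packing_le[OF Q] A1D
    by (intro sum_mono mult_left_mono) (auto intro: order_trans)
  also have "\<dots> = b1"
    using finite_A1 support_\<sigma>1 by (simp add: sum_distrib_right[symmetric] sum_pmf_eq_1)
  finally show ?thesis .
qed

lemma defender_value_less_if_packing:
  assumes Q: "is_set_packing V E C Q" "card Q = Suc b2"
  shows "U1 C \<sigma>1 \<sigma>2 < b1"
proof -
  define d where "d = (\<Sum>e\<in>Q. detect_prob e)"
  have fin: "finite Q"
    using Q(2) card.infinite by fastforce
  have payoff_Q: "attacker_payoff Q = Suc b2 - d"
    unfolding attacker_payoff_def d_def using Q(2) by (simp add: sum_subtractf)
  \<comment> \<open>Dropping one edge of the packing gives an admissible attack; average over the dropped edge.\<close>
  have "b2 * (Suc b2 - d) = (\<Sum>e\<in>Q. attacker_payoff Q - (1 - detect_prob e))"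
    using Q(2) by (simp add: payoff_Q sum_subtractf sum.distrib d_def algebra_simps)
  also have "\<dots> = (\<Sum>e\<in>Q. attacker_payoff (Q - {e}))"
    unfolding attacker_payoff_def using fin by (intro sum.cong) (auto simp: sum_diff1)
  also have "\<dots> \<le> (\<Sum>e\<in>Q. U2 C \<sigma>1 \<sigma>2)"
    using Q fin by (intro sum_mono attacker_payoff_le) (auto simp: A2_def is_set_packing_def)
  finally have "b2 * (Suc b2 - d) \<le> Suc b2 * U2 C \<sigma>1 \<sigma>2"
    using Q(2) by simp
  moreover have "real b2 * d \<le> real b2 * real b1"
    unfolding d_def using Q(1) by (intro mult_left_mono sum_detect_prob_packing_le) auto
  moreover have "Suc b2 * U1 C \<sigma>1 \<sigma>2 \<le> Suc b2 * (b2 - U2 C \<sigma>1 \<sigma>2)"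
    using U1_plus_U2_le by (intro mult_left_mono) auto
  ultimately have "Suc b2 * U1 C \<sigma>1 \<sigma>2 \<le> real b2 * real b1"
    by (simp add: algebra_simps)
  also have "\<dots> < real (Suc b2) * real b1"
    using b1_pos by simp
  finally show ?thesis
    by (simp add: mult_less_cancel_left_pos)
qed

lemma defender_value_pos:
  assumes T: "T \<in> set_pmf \<sigma>2" "T \<noteq> {}"
  shows "0 < U1 C \<sigma>1 \<sigma>2"
proof -
  obtain e where e: "e \<in> T"
    using T by blast
  have "e \<in> E"
    using e T support_\<sigma>2 A2D by blast
  then obtain i where i: "i \<in> V" "e \<in> C i"
    using monitored by blast
  have "0 < pmf \<sigma>2 T"
    using T by (simp add: pmf_positive)
  also have "\<dots> \<le> attack_prob e"
    using T(1) e by (rule attack_prob_ge_pmf)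
  also have "\<dots> \<le> defender_payoff {i}"
    unfolding defender_payoff_def using i finite_covered[of "{i}"]
    by (intro member_le_sum) (auto simp: covered_def attack_prob_nonneg)
  also have "\<dots> \<le> U1 C \<sigma>1 \<sigma>2"
    using i b1_pos by (intro defender_payoff_le) (auto simp: A1_def)
  finally show ?thesis .
qed

lemma defender_payoff_insert:
  assumes "S \<subseteq> V" "i \<in> V" "u \<in> C i" "u \<notin> covered C S"
  shows "defender_payoff S + attack_prob u \<le> defender_payoff (insert i S)"
proof -
  have "defender_payoff S + attack_prob u = (\<Sum>e\<in>insert u (covered C S). attack_prob e)"
    unfolding defender_payoff_def using assms finite_covered by simp
  also have "\<dots> \<le> defender_payoff (insert i S)"
    unfolding defender_payoff_def using assms finite_covered[of "insert i S"]
    by (intro sum_mono2) (auto simp: covered_def attack_prob_nonneg)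
  finally show ?thesis .
qed

lemma exists_small_marginal:
  assumes S: "S \<in> A1 V b1" and less: "defender_payoff S < card S"
  shows "\<exists>j\<in>S. defender_payoff S < defender_payoff (S - {j}) + 1"
proof (rule ccontr)
  assume "\<not> ?thesis"
  then have "1 \<le> defender_payoff S - defender_payoff (S - {j})" if "j \<in> S" for j
    using that by force
  then have "(\<Sum>j\<in>S. 1) \<le> (\<Sum>j\<in>S. defender_payoff S - defender_payoff (S - {j}))"
    by (rule sum_mono)
  also have "\<dots> \<le> defender_payoff S"
    unfolding defender_payoff_def using A1D[OF S] finite_covered
    by (intro sum_covered_marginals_le) (auto simp: attack_prob_nonneg)
  finally show False
    using less by simp
qed

lemma attacked_surely_if_undetected:
  assumes u: "u \<in> E" "detect_prob u = 0" and T: "T \<in> set_pmf \<sigma>2"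
  shows "u \<in> T"
proof (rule ccontr)
  assume uT: "u \<notin> T"
  have TA: "T \<subseteq> E" "finite T" "card T \<le> b2"
    using T support_\<sigma>2 A2D by auto
  have payoff_T: "attacker_payoff T = U2 C \<sigma>1 \<sigma>2"
    using T by (rule attacker_payoff_eq)
  consider "card T < b2" | e where "e \<in> T" "0 < detect_prob e"
    | "card T = b2" "\<forall>e\<in>T. detect_prob e = 0"
    using TA(3) detect_prob_nonneg by (metis antisym_conv2 nat_less_le)
  then show False
  proof cases
    case 1
    then have "attacker_payoff (insert u T) \<le> U2 C \<sigma>1 \<sigma>2"
      using TA u by (intro attacker_payoff_le) (auto simp: A2_def card_insert_if)
    moreover have "attacker_payoff (insert u T) = 1 + attacker_payoff T"
      unfolding attacker_payoff_def using TA uT u by simp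
    ultimately show False
      using payoff_T by simp
  next
    case (2 e)
    then have "0 < card T"
      using TA card_gt_0_iff by blast
    then have "attacker_payoff (insert u (T - {e})) \<le> U2 C \<sigma>1 \<sigma>2"
      using TA u 2 by (intro attacker_payoff_le) (auto simp: A2_def card_insert_if)
    moreover have "attacker_payoff (insert u (T - {e})) = 1 + attacker_payoff T - (1 - detect_prob e)"
      unfolding attacker_payoff_def using TA uT u 2 by (simp add: sum_diff1)
    ultimately show False
      using payoff_T 2 by simp
  next
    case 3
    then have "U2 C \<sigma>1 \<sigma>2 = b2"
      using payoff_T by (simp add: attacker_payoff_def)
    moreover have "0 < U1 C \<sigma>1 \<sigma>2"
      using T 3 b2_pos by (intro defender_value_pos) auto
    ultimately show False
      using U1_plus_U2_le by simp
  qed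
qed

lemma covered_subset_covered_node_basis:
  assumes "S \<in> set_pmf \<sigma>1"
  shows "covered C S \<subseteq> covered C (node_basis V \<sigma>1)"
proof -
  have "i \<in> node_basis V \<sigma>1" if i: "i \<in> S" for i
  proof -
    have "0 < pmf \<sigma>1 S"
      using assms by (simp add: pmf_positive)
    also have "\<dots> \<le> measure_pmf.prob \<sigma>1 {S. i \<in> S}"
      using i by (simp add: measure_pmf_single[symmetric] measure_pmf.finite_measure_mono)
    finally show ?thesis
      using i assms support_\<sigma>1 A1D by (auto simp: node_basis_def)
  qed
  then show ?thesis
    by (auto simp: covered_def)
qed

end

locale scarce_equilibrium = nash_equilibrium +
  assumes cover_scarce: "b1 < n_star V E C" and packing_scarce: "b2 < m_star V E C"
begin

lemma covered_neq_E:
  assumes "S \<in> A1 V b1"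
  shows "covered C S \<noteq> E"
proof
  assume "covered C S = E"
  then have "n_star V E C \<le> card S"
    using A1D[OF assms] finite_V by (intro n_star_le_card_cover) (auto simp: is_set_cover_def)
  then show False
    using A1D[OF assms] cover_scarce by simp
qed

lemma defender_value_less_b1: "U1 C \<sigma>1 \<sigma>2 < b1"
proof -
  obtain P where P: "is_set_packing V E C P" "card P = m_star V E C"
    using exists_packing_card_m_star[OF finite_E] .
  moreover have "finite P"
    using P(1) finite_E by (auto simp: is_set_packing_def intro: finite_subset)
  moreover obtain Q where "Q \<subseteq> P" "card Q = Suc b2"
    using obtain_subset_with_card_n[of "Suc b2" P] P(2) packing_scarce by auto
  ultimately show ?thesis
    by (intro defender_value_less_if_packing[of Q]) (auto intro: is_set_packing_subset)
qed

lemma attack_prob_neq_1_if_uncovered: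
  assumes S: "S \<in> set_pmf \<sigma>1" and u: "u \<in> E" "u \<notin> covered C S"
  shows "attack_prob u \<noteq> 1"
proof
  assume sure: "attack_prob u = 1"
  obtain i where i: "i \<in> V" "u \<in> C i"
    using monitored u(1) by blast
  have SA: "S \<in> A1 V b1" "S \<subseteq> V" "finite S" "card S \<le> b1"
    using S support_\<sigma>1 A1D by auto
  have payoff_S: "defender_payoff S = U1 C \<sigma>1 \<sigma>2"
    using S by (rule defender_payoff_eq)
  have gain: "defender_payoff S' + 1 \<le> defender_payoff (insert i S')" if "S' \<subseteq> S" for S'
    using defender_payoff_insert[of S' i u] that SA i u sure by (auto simp: covered_def)
  show False
  proof (cases "card S < b1")
    case True
    then have "defender_payoff (insert i S) \<le> U1 C \<sigma>1 \<sigma>2"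
      using SA i by (intro defender_payoff_le) (auto simp: A1_def card_insert_if)
    then show False
      using gain[of S] payoff_S by simp
  next
    case False
    then have "defender_payoff S < card S"
      using SA payoff_S defender_value_less_b1 by simp
    then obtain j where j: "j \<in> S" "defender_payoff S < defender_payoff (S - {j}) + 1"
      using exists_small_marginal[OF SA(1)] by blast
    have "card (insert i (S - {j})) \<le> b1"
      using j(1) SA card_gt_0_iff[of S] by (auto simp: card_insert_if)
    then have "defender_payoff (insert i (S - {j})) \<le> U1 C \<sigma>1 \<sigma>2"
      using SA i by (intro defender_payoff_le) (auto simp: A1_def)
    then show False
      using gain[of "S - {j}"] j payoff_S by simp
  qed
qed

lemma node_basis_is_set_cover: "is_set_cover V E C (node_basis V \<sigma>1)"
proof -
  have "u \<in> covered C (node_basis V \<sigma>1)" if u: "u \<in> E" for u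
  proof (rule ccontr)
    assume "u \<notin> covered C (node_basis V \<sigma>1)"
    then have undetected: "u \<notin> covered C S" if "S \<in> set_pmf \<sigma>1" for S
      using covered_subset_covered_node_basis[OF that] by blast
    then have "attack_prob u = 1"
      using attacked_surely_if_undetected[OF u detect_prob_eq_0] by (blast intro: attack_prob_eq_1)
    moreover obtain S where "S \<in> set_pmf \<sigma>1"
      using set_pmf_not_empty by fast
    ultimately show False
      using attack_prob_neq_1_if_uncovered u undetected by blast
  qed
  moreover have "node_basis V \<sigma>1 \<subseteq> V"
    by (auto simp: node_basis_def)
  ultimately show ?thesis
    using covered_subset_E by (auto simp: is_set_cover_def)
qed

lemma \<sigma>1_not_pure: "\<sigma>1 \<noteq> return_pmf S"
proof
  assume \<sigma>1: "\<sigma>1 = return_pmf S"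
  then have S: "S \<in> A1 V b1"
    using support_\<sigma>1 by auto
  then have "node_basis V \<sigma>1 = S"
    using \<sigma>1 A1D by (auto simp: node_basis_def indicator_def)
  then show False
    using node_basis_is_set_cover covered_neq_E[OF S] by (simp add: is_set_cover_def)
qed

lemma \<sigma>2_not_pure: "\<sigma>2 \<noteq> return_pmf T"
proof
  assume \<sigma>2: "\<sigma>2 = return_pmf T"
  then have T: "T \<in> set_pmf \<sigma>2"
    by simp
  obtain S where S: "S \<in> set_pmf \<sigma>1"
    using set_pmf_not_empty by fast
  show False
  proof (cases "\<exists>S\<in>set_pmf \<sigma>1. \<exists>e\<in>T. e \<notin> covered C S")
    case True
    then obtain S e where "S \<in> set_pmf \<sigma>1" "e \<in> T" "e \<notin> covered C S"
      by blast
    moreover have "e \<in> E"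
      using T \<open>e \<in> T\<close> support_\<sigma>2 A2D by blast
    moreover have "attack_prob e = 1"
      using \<sigma>2 \<open>e \<in> T\<close> by (intro attack_prob_eq_1) simp
    ultimately show False
      using attack_prob_neq_1_if_uncovered by blast
  next
    case False
    \<comment> \<open>\<open>T\<close> is detected surely, so the attacker's value is \<open>0\<close>; a single edge missed by \<open>S\<close> does better.\<close>
    then have "attacker_payoff T = 0"
      by (simp add: attacker_payoff_def detect_prob_eq_1)
    then have attacker_value: "U2 C \<sigma>1 \<sigma>2 = 0"
      using attacker_payoff_eq[OF T] by simp
    have SA: "S \<in> A1 V b1"
      using S support_\<sigma>1 by auto
    then obtain e where e: "e \<in> E" "e \<notin> covered C S"
      using covered_neq_E covered_subset_E A1D by blast
    then have "attacker_payoff {e} \<le> U2 C \<sigma>1 \<sigma>2"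
      using b2_pos by (intro attacker_payoff_le) (auto simp: A2_def)
    moreover have "attacker_payoff {e} = 1 - detect_prob e"
      by (simp add: attacker_payoff_def)
    moreover have "0 < pmf \<sigma>1 S"
      using S by (simp add: pmf_positive)
    ultimately show False
      using detect_prob_le[OF S e(2)] attacker_value by simp
  qed
qed

end

theorem proposition3:
  fixes V :: "'v set" and E :: "'e set" and C :: "'v \<Rightarrow> 'e set" and b1 b2 :: nat
  assumes "detection_model V E C"
    and "0 < b1" and "0 < b2"
    and "b1 < n_star V E C" and "b2 < m_star V E C"
  shows "(\<forall>\<sigma>1 \<sigma>2. nash_eq V E C b1 b2 \<sigma>1 \<sigma>2 \<longrightarrow>
            is_set_cover V E C (node_basis V \<sigma>1)) \<and>
         \<not> (\<exists>\<sigma>1 \<sigma>2. nash_eq V E C b1 b2 \<sigma>1 \<sigma>2 \<and>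
               ((\<exists>S. \<sigma>1 = return_pmf S) \<or> (\<exists>T. \<sigma>2 = return_pmf T)))"
proof -
  have "scarce_equilibrium V E C b1 b2 \<sigma>1 \<sigma>2" if "nash_eq V E C b1 b2 \<sigma>1 \<sigma>2" for \<sigma>1 \<sigma>2
    using assms that by unfold_locales auto
  then show ?thesis
    by (metis scarce_equilibrium.node_basis_is_set_cover scarce_equilibrium.\<sigma>1_not_pure
        scarce_equilibrium.\<sigma>2_not_pure)
qed

end
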